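(* Define $L:\mathbf{MKF}_\infty\to\mathbf{KFR}$ by $L(\langle W,S\rangle)=\langle W,\bigcap S\rangle$ and $L(f)=f$, and $M:\mathbf{KFR}\to\mathbf{MKF}_\infty$ by $M(\langle W,R\rangle)=\langle W,\{R\}\rangle$ and $M(f)=f$. Then $L$ and $M$ are well-defined functors and $L\circ M\cong \mathrm{id}_{\mathbf{KFR}}$, $M\circ L\cong\mathrm{id}_{\mathbf{MKF}_\infty}$; hence $\mathbf{MKF}_\infty$ and $\mathbf{KFR}$ are equivalent.
   Context: A Kripke frame is a pair $\langle W,R\rangle$ with $W$ a non-empty set and $R\subseteq W\times W$. A homomorphism of Kripke frames $f:\langle W_1,R_1\rangle\to\langle W_2,R_2\rangle$ is a map $f:W_1\to W_2$ such that (a) $vR_1w$ implies $f(v)R_2f(w)$, and (b) if $f(w)R_2u$ then there is $v\in W_1$ with $wR_1v$ and $f(v)=u$. $\mathbf{KFR}$ is the category of Kripke frames and their homomorphisms. A multi-relational Kripke frame is a pair $\langle W,S\rangle$ where $W$ is a non-empty set and $S$ is a non-empty set of binary relations on $W$. It is completely downward directed if for every $S'\subseteq S$ there is $R\in S$ with $R\subseteq\bigcap S'$ (with $\bigcap\emptyset=W\times W$); equivalently $\bigcap S\in S$. A homomorphism of multi-relational Kripke frames $f:\langle W_1,S_1\rangle\to\langle W_2,S_2\rangle$ is a map $f:W_1\to W_2$ such that: (i) for every $x\in W_1$ and $R_2\in S_2$ there is $R_1\in S_1$ such that for all $y\in W_1$, $xR_1y$ implies $f(x)R_2f(y)$; (ii)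 for every $x\in W_1$ and $R_1\in S_1$ there is $R_2\in S_2$ such that for all $u\in W_2$, if $f(x)R_2u$ then there exists $y\in W_1$ with $xR_1y$ and $f(y)=u$. $\mathbf{MKF}_\infty$ is the category of completely downward directed multi-relational Kripke frames with these homomorphisms. *)

theory Defs
  imports Main
begin

definition kfr :: "'a set \<Rightarrow> ('a \<times> 'a) set \<Rightarrow> bool" where
  "kfr W R \<longleftrightarrow> W \<noteq> {} \<and> R \<subseteq> W \<times> W"

definition kfr_hom :: "'a set \<Rightarrow> ('a \<times> 'a) set \<Rightarrow> 'b set \<Rightarrow> ('b \<times> 'b) set \<Rightarrow> ('a \<Rightarrow> 'b) \<Rightarrow> bool" where
  "kfr_hom W1 R1 W2 R2 f \<longleftrightarrow>
     f ` W1 \<subseteq> W2 \<and>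
     (\<forall>v\<in>W1. \<forall>w\<in>W1. (v, w) \<in> R1 \<longrightarrow> (f v, f w) \<in> R2) \<and>
     (\<forall>w\<in>W1. \<forall>u\<in>W2. (f w, u) \<in> R2 \<longrightarrow> (\<exists>v\<in>W1. (w, v) \<in> R1 \<and> f v = u))"

definition mkf :: "'a set \<Rightarrow> ('a \<times> 'a) set set \<Rightarrow> bool" where
  "mkf W S \<longleftrightarrow> W \<noteq> {} \<and> S \<noteq> {} \<and> (\<forall>R\<in>S. R \<subseteq> W \<times> W)"

text \<open>Complete downward directedness; the empty intersection is W x W.\<close>
definition cdd :: "'a set \<Rightarrow> ('a \<times> 'a) set set \<Rightarrow> bool" where
  "cdd W S \<longleftrightarrow> (\<forall>S'\<subseteq>S. \<exists>R\<in>S. R \<subseteq> (W \<times> W) \<inter> \<Inter>S')"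

definition mkf_inf :: "'a set \<Rightarrow> ('a \<times> 'a) set set \<Rightarrow> bool" where
  "mkf_inf W S \<longleftrightarrow> mkf W S \<and> cdd W S"

definition mkf_hom :: "'a set \<Rightarrow> ('a \<times> 'a) set set \<Rightarrow> 'b set \<Rightarrow> ('b \<times> 'b) set set \<Rightarrow> ('a \<Rightarrow> 'b) \<Rightarrow> bool" where
  "mkf_hom W1 S1 W2 S2 f \<longleftrightarrow>
     f ` W1 \<subseteq> W2 \<and>
     (\<forall>x\<in>W1. \<forall>R2\<in>S2. \<exists>R1\<in>S1. \<forall>y\<in>W1. (x, y) \<in> R1 \<longrightarrow> (f x, f y) \<in> R2) \<and>
     (\<forall>x\<in>W1. \<forall>R1\<in>S1. \<exists>R2\<in>S2. \<forall>u\<in>W2. (f x, u) \<in> R2 \<longrightarrow> (\<exists>y\<in>W1. (x, y) \<in> R1 \<and> f y = u))"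

text \<open>Object parts of the functors L and M (on morphisms both are the identity on maps).\<close>
definition L_obj :: "'a set \<times> ('a \<times> 'a) set set \<Rightarrow> 'a set \<times> ('a \<times> 'a) set" where
  "L_obj F = (fst F, \<Inter>(snd F))"

definition M_obj :: "'a set \<times> ('a \<times> 'a) set \<Rightarrow> 'a set \<times> ('a \<times> 'a) set set" where
  "M_obj F = (fst F, {snd F})"

end

theory Submission
  imports Defs
begin

text \<open>Complete downward directedness applied to S itself puts \<open>\<Inter>S\<close> into S. With that
  single relation in hand, condition (i) of a multi-relational homomorphism for \<open>\<Inter>S\<^sub>2\<close>
  and condition (ii) for \<open>\<Inter>S\<^sub>1\<close> are exactly the two Kripke homomorphism conditions, and
  the identity map compares S with the singleton \<open>{\<Inter>S}\<close> in both directions, since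
  every member of S contains \<open>\<Inter>S\<close>.\<close>

lemma mkf_inf_Inter_mem:
  assumes "mkf_inf W S"
  shows "\<Inter>S \<in> S" and "\<Inter>S \<subseteq> W \<times> W"
proof -
  from assms obtain R where R: "R \<in> S" "R \<subseteq> (W \<times> W) \<inter> \<Inter>S"
    unfolding mkf_inf_def cdd_def by blast
  then have "R = \<Inter>S" by blast
  with R show "\<Inter>S \<in> S" and "\<Inter>S \<subseteq> W \<times> W" by auto
qed

lemma kfr_Inter:
  assumes "mkf_inf W S"
  shows "kfr W (\<Inter>S)"
  using assms mkf_inf_Inter_mem(2)[OF assms] by (simp add: kfr_def mkf_inf_def mkf_def)

lemma kfr_hom_Inter:
  assumes "\<Inter>S1 \<in> S1" and "\<Inter>S2 \<in> S2" and hom: "mkf_hom W1 S1 W2 S2 f"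
  shows "kfr_hom W1 (\<Inter>S1) W2 (\<Inter>S2) f"
  unfolding kfr_hom_def
proof (intro conjI ballI impI)
  show "f ` W1 \<subseteq> W2" using hom by (simp add: mkf_hom_def)
next
  fix v w assume "v \<in> W1" "w \<in> W1" "(v, w) \<in> \<Inter>S1"
  moreover from hom \<open>v \<in> W1\<close> \<open>\<Inter>S2 \<in> S2\<close> obtain R1
    where "R1 \<in> S1" "\<forall>y\<in>W1. (v, y) \<in> R1 \<longrightarrow> (f v, f y) \<in> \<Inter>S2"
    unfolding mkf_hom_def by blast
  ultimately show "(f v, f w) \<in> \<Inter>S2" by blast
next
  fix w u assume "w \<in> W1" "u \<in> W2" "(f w, u) \<in> \<Inter>S2"
  moreover from hom \<open>w \<in> W1\<close> \<open>\<Inter>S1 \<in> S1\<close> obtain R2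
    where "R2 \<in> S2" "\<forall>u\<in>W2. (f w, u) \<in> R2 \<longrightarrow> (\<exists>y\<in>W1. (w, y) \<in> \<Inter>S1 \<and> f y = u)"
    unfolding mkf_hom_def by blast
  ultimately show "\<exists>v\<in>W1. (w, v) \<in> \<Inter>S1 \<and> f v = u" by blast
qed

lemma mkf_inf_singleton:
  assumes "kfr W R"
  shows "mkf_inf W {R}"
  using assms by (auto simp: mkf_inf_def mkf_def cdd_def kfr_def)

lemma mkf_hom_singleton_iff:
  "mkf_hom W1 {R1} W2 {R2} f \<longleftrightarrow> kfr_hom W1 R1 W2 R2 f"
  by (simp add: mkf_hom_def kfr_hom_def)

lemma mkf_hom_id_to_Inter:
  assumes "\<Inter>S \<in> S"
  shows "mkf_hom W S W {\<Inter>S} id"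
  unfolding mkf_hom_def
proof (intro conjI ballI)
  fix x R2 assume "R2 \<in> {\<Inter>S}"
  then show "\<exists>R1\<in>S. \<forall>y\<in>W. (x, y) \<in> R1 \<longrightarrow> (id x, id y) \<in> R2"
    using assms by auto
qed auto

lemma mkf_hom_id_from_Inter:
  assumes "\<Inter>S \<in> S"
  shows "mkf_hom W {\<Inter>S} W S id"
  using assms unfolding mkf_hom_def by auto

theorem mainTheorem2:
  shows
  \<comment> \<open>L is well defined on objects and morphisms\<close>
  "(\<forall>(W::'a set) S. mkf_inf W S \<longrightarrow> kfr (fst (L_obj (W, S))) (snd (L_obj (W, S))))
   \<and> (\<forall>(W1::'a set) S1 (W2::'b set) S2 f. mkf_inf W1 S1 \<and> mkf_inf W2 S2 \<and> mkf_hom W1 S1 W2 S2 f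
        \<longrightarrow> kfr_hom (fst (L_obj (W1, S1))) (snd (L_obj (W1, S1)))
                    (fst (L_obj (W2, S2))) (snd (L_obj (W2, S2))) f)
   \<comment> \<open>M is well defined on objects and morphisms\<close>
   \<and> (\<forall>(W::'a set) R. kfr W R \<longrightarrow> mkf_inf (fst (M_obj (W, R))) (snd (M_obj (W, R))))
   \<and> (\<forall>(W1::'a set) R1 (W2::'b set) R2 f. kfr W1 R1 \<and> kfr W2 R2 \<and> kfr_hom W1 R1 W2 R2 f
        \<longrightarrow> mkf_hom (fst (M_obj (W1, R1))) (snd (M_obj (W1, R1)))
                    (fst (M_obj (W2, R2))) (snd (M_obj (W2, R2))) f)
   \<comment> \<open>L o M = id on objects of KFR (so the identity maps give a natural isomorphism)\<close>
   \<and> (\<forall>(W::'a set) R. kfr W R \<longrightarrow> L_obj (M_obj (W, R)) = (W, R))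
   \<comment> \<open>M o L is isomorphic to id via identity maps: both directions are MKF-homomorphisms,
       mutually inverse and trivially natural\<close>
   \<and> (\<forall>(W::'a set) S. mkf_inf W S \<longrightarrow>
        mkf_hom W S (fst (M_obj (L_obj (W, S)))) (snd (M_obj (L_obj (W, S)))) id
      \<and> mkf_hom (fst (M_obj (L_obj (W, S)))) (snd (M_obj (L_obj (W, S)))) W S id)"
  unfolding L_obj_def M_obj_def fst_conv snd_conv
proof (intro conjI allI impI)
  fix W1 :: "'a set" and S1 and W2 :: "'b set" and S2 and f
  assume "mkf_inf W1 S1 \<and> mkf_inf W2 S2 \<and> mkf_hom W1 S1 W2 S2 f"
  then show "kfr_hom W1 (\<Inter>S1) W2 (\<Inter>S2) f"
    by (blast intro: kfr_hom_Inter mkf_inf_Inter_mem)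
qed (auto simp: mkf_hom_singleton_iff intro: kfr_Inter mkf_inf_singleton
       mkf_hom_id_to_Inter mkf_hom_id_from_Inter mkf_inf_Inter_mem)

end
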